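(* Let $(p_n)$ be a sequence of positive integers with $p_n\to+\infty$, and for each $n$ let $\mathbf{U}_{n1},\ldots,\mathbf{U}_{nn}$ be i.i.d. uniform on $\mathcal{S}^{p_n-1}$. Let $$D^R_{n\ell}=\frac{\sqrt{2p_n}}{n}\sum_{i=1}^{\ell-1}\mathbf{U}_{ni}'\mathbf{U}_{n\ell},\qquad \ell=1,\ldots,n$$ (an empty sum being zero). Then for every $\varepsilon>0$, $\sum_{\ell=1}^n{\rm E}\big[(D^R_{n\ell})^2\,\mathbb{I}[|D^R_{n\ell}|>\varepsilon]\big]\to0$ as $n\to\infty$.
   Context: $\mathcal{S}^{p-1}$ denotes the unit sphere of $\mathbb{R}^p$; $\mathbb{I}[\cdot]$ is the indicator function. *)

theory Defs
  imports "HOL-Probability.Probability"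
begin

text \<open>Euclidean space R^p is represented as extensional functions on the index set
  {..<p}, with Lebesgue measure given by the product of lborel.\<close>

definition euclR :: "nat \<Rightarrow> (nat \<Rightarrow> real) measure" where
  "euclR p = PiM {..<p} (\<lambda>_. lborel)"

definition inprod :: "nat \<Rightarrow> (nat \<Rightarrow> real) \<Rightarrow> (nat \<Rightarrow> real) \<Rightarrow> real" where
  "inprod p u v = (\<Sum>k<p. u k * v k)"

definition enorm :: "nat \<Rightarrow> (nat \<Rightarrow> real) \<Rightarrow> real" where
  "enorm p u = sqrt (inprod p u u)"

definition unit_ball :: "nat \<Rightarrow> (nat \<Rightarrow> real) set" where
  "unit_ball p = {x \<in> space (euclR p). enorm p x \<le> 1}"

definition normalize_vec :: "nat \<Rightarrow> (nat \<Rightarrow> real) \<Rightarrow> (nat \<Rightarrow> real)" where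
  "normalize_vec p x = (\<lambda>i\<in>{..<p}. x i / enorm p x)"

text \<open>Uniform (normalized surface) measure on the unit sphere S^{p-1}, defined as the
  cone measure: the push-forward of the uniform distribution on the unit ball
  under the radial projection x \<mapsto> x/|x|.\<close>

definition sphere_unif :: "nat \<Rightarrow> (nat \<Rightarrow> real) measure" where
  "sphere_unif p = distr (uniform_measure (euclR p) (unit_ball p)) (euclR p) (normalize_vec p)"

end

theory Submission
  imports Defs
begin

text \<open>Since \<open>D\<^sup>2 \<bbbI>[\<bar>D\<bar> > \<epsilon>] \<le> D\<^sup>4 / \<epsilon>\<^sup>2\<close>, it suffices to bound fourth moments.
  Conditionally on \<open>U\<^sub>l = v\<close>, the cross sum \<open>S\<^sub>l\<close> of the \<open>U\<^sub>i'U\<^sub>l\<close> over \<open>i < l\<close> is a sum of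
  \<open>l - 1\<close> independent centred variables \<open>U\<^sub>i'v\<close> with \<open>\<bar>v\<bar> = 1\<close>. The uniform measure on the
  sphere inherits invariance under plane rotations from Lebesgue measure (a rotation is a product of
  three shears), so \<open>U'v\<close> has the law of \<open>\<bar>v\<bar> x\<^sub>0\<close>, whose second and fourth moments are
  \<open>1/p\<close> and \<open>3/(p(p+2))\<close>. Hence \<open>E S\<^sub>l\<^sup>4 \<le> 3(l-1)\<^sup>2/p\<^sup>2\<close>, each Lindeberg term is at most
  \<open>12/(n\<^sup>2\<epsilon>\<^sup>2)\<close>, and the Lindeberg sum is at most \<open>12/(n\<epsilon>\<^sup>2)\<close>, whatever the dimensions.\<close>

section \<open>Lebesgue measure on coordinate spaces\<close>

abbreviation lborel_on :: "nat set \<Rightarrow> (nat \<Rightarrow> real) measure" where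
  "lborel_on I \<equiv> PiM I (\<lambda>_. lborel)"

lemma product_sigma_finite_lborel: "product_sigma_finite (\<lambda>_::nat. lborel :: real measure)"
  by (simp add: product_sigma_finite_def lborel.sigma_finite_measure_axioms)

lemma emeasure_lborel_on_PiE:
  "finite I \<Longrightarrow> (\<And>k. k \<in> I \<Longrightarrow> A k \<in> sets lborel) \<Longrightarrow>
    emeasure (lborel_on I) (Pi\<^sub>E I A) = (\<Prod>k\<in>I. emeasure lborel (A k))"
  by (rule product_sigma_finite.emeasure_PiM[OF product_sigma_finite_lborel])

lemma distr_lborel_add_const: "distr lborel lborel (\<lambda>t. t + c) = (lborel :: real measure)"
proof -
  have "distr lborel lborel (\<lambda>t. t + c) = distr lborel borel ((+) c)"
    by (simp add: add.commute cong: distr_cong)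
  then show ?thesis by (simp add: lborel_distr_plus)
qed

lemma distr_lborel_uminus: "distr lborel lborel uminus = (lborel :: real measure)"
  by (metis lborel_distr_uminus distr_cong sets_lborel)

lemma measurable_fun_upd_lborel_on:
  assumes "i \<in> I" and [measurable]: "f \<in> borel_measurable (lborel_on I)"
  shows "(\<lambda>x. x(i := f x)) \<in> lborel_on I \<rightarrow>\<^sub>M lborel_on I"
proof (rule measurable_PiM_single')
  fix k assume "k \<in> I"
  then show "(\<lambda>x. (x(i := f x)) k) \<in> lborel_on I \<rightarrow>\<^sub>M lborel"
    by (cases "k = i") simp_all
next
  show "(\<lambda>x. x(i := f x)) \<in> space (lborel_on I) \<rightarrow> (\<Pi>\<^sub>E i\<in>I. space lborel)"
    using assms(1) by (auto simp: space_PiM PiE_def extensional_def)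
qed

text \<open>By Fubini, integrating over the \<open>i\<close>-th coordinate first.\<close>

lemma distr_lborel_on_fibrewise:
  fixes T :: "(nat \<Rightarrow> real) \<Rightarrow> (nat \<Rightarrow> real)"
  assumes "finite I" and "i \<in> I"
    and T: "T \<in> lborel_on I \<rightarrow>\<^sub>M lborel_on I"
    and T_upd: "\<And>x t. x \<in> space (lborel_on (I - {i})) \<Longrightarrow> T (x(i := t)) = x(i := h x t)"
    and h: "\<And>x. x \<in> space (lborel_on (I - {i})) \<Longrightarrow> h x \<in> borel_measurable lborel"
    and h_distr: "\<And>x. x \<in> space (lborel_on (I - {i})) \<Longrightarrow> distr lborel lborel (h x) = lborel"
  shows "distr (lborel_on I) (lborel_on I) T = lborel_on I"
proof -
  define J where "J = I - {i}"
  have I: "I = insert i J" and J: "finite J" "i \<notin> J"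
    using assms(1,2) by (auto simp: J_def)
  note nn_integral_insert = product_sigma_finite.product_nn_integral_insert[OF product_sigma_finite_lborel J]
  have T': "T \<in> lborel_on (insert i J) \<rightarrow>\<^sub>M lborel_on (insert i J)"
    using T by (simp add: I)
  have "distr (lborel_on (insert i J)) (lborel_on (insert i J)) T = lborel_on (insert i J)"
  proof (rule measure_eqI)
    fix A assume "A \<in> sets (distr (lborel_on (insert i J)) (lborel_on (insert i J)) T)"
    then have A: "A \<in> sets (lborel_on (insert i J))" by simp
    have "emeasure (distr (lborel_on (insert i J)) (lborel_on (insert i J)) T) A
        = (\<integral>\<^sup>+ z. indicator A z \<partial>distr (lborel_on (insert i J)) (lborel_on (insert i J)) T)"
      using A by simp
    also have "\<dots> = (\<integral>\<^sup>+ z. indicator A (T z) \<partial>lborel_on (insert i J))"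
      by (rule nn_integral_distr[OF T']) (use A in measurable)
    also have "\<dots> = (\<integral>\<^sup>+ x. (\<integral>\<^sup>+ t. indicator A (T (x(i := t))) \<partial>lborel) \<partial>lborel_on J)"
      using nn_integral_insert[where f = "\<lambda>z. indicator A (T z)"] T' A by simp
    also have "\<dots> = (\<integral>\<^sup>+ x. (\<integral>\<^sup>+ t. indicator A (x(i := t)) \<partial>lborel) \<partial>lborel_on J)"
    proof (rule nn_integral_cong)
      fix x assume x: "x \<in> space (lborel_on J)"
      then have x': "x \<in> space (lborel_on (I - {i}))" by (simp add: J_def)
      have A_upd: "(\<lambda>t. indicator A (x(i := t)) :: ennreal) \<in> borel_measurable lborel"
        using measurable_component_update[OF x J(2)] A by measurable
      have "(\<integral>\<^sup>+ t. indicator A (T (x(i := t))) \<partial>lborel) = (\<integral>\<^sup>+ t. indicator A (x(i := h x t)) \<partial>lborel)"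
        using T_upd[OF x'] by simp
      also have "\<dots> = (\<integral>\<^sup>+ t. indicator A (x(i := t)) \<partial>distr lborel lborel (h x))"
        using h[OF x'] A_upd by (simp add: nn_integral_distr)
      finally show "(\<integral>\<^sup>+ t. indicator A (T (x(i := t))) \<partial>lborel) = (\<integral>\<^sup>+ t. indicator A (x(i := t)) \<partial>lborel)"
        by (simp add: h_distr[OF x'])
    qed
    also have "\<dots> = emeasure (lborel_on (insert i J)) A"
      using nn_integral_insert[where f = "indicator A"] A by simp
    finally show "emeasure (distr (lborel_on (insert i J)) (lborel_on (insert i J)) T) A
        = emeasure (lborel_on (insert i J)) A" .
  qed simp
  then show ?thesis by (simp add: I)
qed

definition shear :: "nat \<Rightarrow> nat \<Rightarrow> real \<Rightarrow> (nat \<Rightarrow> real) \<Rightarrow> (nat \<Rightarrow> real)" where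
  "shear i j a x = x(i := x i + a * x j)"

definition coord_flip :: "nat \<Rightarrow> (nat \<Rightarrow> real) \<Rightarrow> (nat \<Rightarrow> real)" where
  "coord_flip i x = x(i := - x i)"

lemma measurable_shear: "i \<in> I \<Longrightarrow> j \<in> I \<Longrightarrow> shear i j a \<in> lborel_on I \<rightarrow>\<^sub>M lborel_on I"
  unfolding shear_def by (rule measurable_fun_upd_lborel_on) simp_all

lemma measurable_coord_flip: "i \<in> I \<Longrightarrow> coord_flip i \<in> lborel_on I \<rightarrow>\<^sub>M lborel_on I"
  unfolding coord_flip_def by (rule measurable_fun_upd_lborel_on) simp_all

lemma distr_lborel_on_shear:
  assumes "finite I" "i \<in> I" "j \<in> I" "i \<noteq> j"
  shows "distr (lborel_on I) (lborel_on I) (shear i j a) = lborel_on I"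
  using assms
  by (intro distr_lborel_on_fibrewise[where h = "\<lambda>x t. t + a * x j"])
     (auto simp: shear_def measurable_shear distr_lborel_add_const)

lemma distr_lborel_on_coord_flip:
  assumes "finite I" "i \<in> I"
  shows "distr (lborel_on I) (lborel_on I) (coord_flip i) = lborel_on I"
  using assms
  by (intro distr_lborel_on_fibrewise[where h = "\<lambda>x. uminus"])
     (auto simp: coord_flip_def measurable_coord_flip distr_lborel_uminus)

definition plane_rotation :: "nat \<Rightarrow> nat \<Rightarrow> real \<Rightarrow> real \<Rightarrow> (nat \<Rightarrow> real) \<Rightarrow> (nat \<Rightarrow> real)" where
  "plane_rotation i j c s x = x(i := c * x i + s * x j, j := - s * x i + c * x j)"

text \<open>The classical three-shear decomposition; \<open>(1 - c) / s\<close> is \<open>tan(\<theta>/2)\<close>.\<close>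

lemma plane_rotation_eq_shears:
  assumes "i \<noteq> j" "c\<^sup>2 + s\<^sup>2 = 1" "s \<noteq> 0"
  shows "plane_rotation i j c s = shear i j ((1 - c) / s) \<circ> shear j i (- s) \<circ> shear i j ((1 - c) / s)"
proof
  fix x :: "nat \<Rightarrow> real"
  define a where "a = (1 - c) / s"
  have c: "c = 1 - a * s" using assms(3) by (simp add: a_def)
  have s: "s + a * (a * s) = a * 2"
  proof -
    have "s + a * (a * s) - a * 2 = - a * (1 + c) + s" by (simp add: c algebra_simps)
    also have "- a * (1 + c) = - (1 - c\<^sup>2) / s"
      using assms(3) by (simp add: a_def power2_eq_square field_simps)
    also have "\<dots> = - s" using assms(2,3) by (simp add: field_simps power2_eq_square)
    finally show ?thesis by simp
  qed
  have sx: "s * y + a * (a * (s * y)) = a * (y * 2)" for y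
  proof -
    have "s * y + a * (a * (s * y)) = (s + a * (a * s)) * y" by (simp add: algebra_simps)
    then show ?thesis unfolding s by (simp add: mult_ac)
  qed
  show "plane_rotation i j c s x = (shear i j a \<circ> shear j i (- s) \<circ> shear i j a) x"
  proof (rule ext)
    fix k
    show "plane_rotation i j c s x k = (shear i j a \<circ> shear j i (- s) \<circ> shear i j a) x k"
      using assms(1)
      by (cases "k = i"; cases "k = j")
        (simp_all add: plane_rotation_def shear_def c algebra_simps sx)
  qed
qed


lemma distr_comp_eq_self:
  assumes "f \<in> M \<rightarrow>\<^sub>M M" "g \<in> M \<rightarrow>\<^sub>M M" "distr M M f = M" "distr M M g = M"
  shows "distr M M (f \<circ> g) = M"
  using distr_distr[OF assms(1,2)] assms(3,4) by simp

lemma distr_lborel_on_plane_rotation: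
  assumes "finite I" "i \<in> I" "j \<in> I" "i \<noteq> j" "c\<^sup>2 + s\<^sup>2 = 1"
  shows "distr (lborel_on I) (lborel_on I) (plane_rotation i j c s) = lborel_on I"
proof (cases "s = 0")
  case True
  with assms(5) have "c = 1 \<or> c = -1" by (simp add: power2_eq_1_iff)
  then show ?thesis
  proof
    assume "c = 1"
    then have "plane_rotation i j c s = (\<lambda>x. x)"
      using True by (auto simp: plane_rotation_def fun_eq_iff)
    then show ?thesis by simp
  next
    assume "c = -1"
    then have "plane_rotation i j c s = coord_flip i \<circ> coord_flip j"
      using True assms(4) by (auto simp: plane_rotation_def coord_flip_def fun_eq_iff)
    then show ?thesis
      using assms by (simp add: distr_comp_eq_self measurable_coord_flip distr_lborel_on_coord_flip)
  qed
next
  case False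
  define a where "a = (1 - c) / s"
  have shear_ij: "shear i j a \<in> lborel_on I \<rightarrow>\<^sub>M lborel_on I"
    "distr (lborel_on I) (lborel_on I) (shear i j a) = lborel_on I"
    using assms by (simp_all add: measurable_shear distr_lborel_on_shear)
  have shear_ji: "shear j i (- s) \<in> lborel_on I \<rightarrow>\<^sub>M lborel_on I"
    "distr (lborel_on I) (lborel_on I) (shear j i (- s)) = lborel_on I"
    using assms by (simp_all add: measurable_shear distr_lborel_on_shear)
  have "distr (lborel_on I) (lborel_on I) (shear i j a \<circ> shear j i (- s)) = lborel_on I"
    by (rule distr_comp_eq_self[OF shear_ij(1) shear_ji(1) shear_ij(2) shear_ji(2)])
  then show ?thesis
    using assms False
    by (simp add: plane_rotation_eq_shears a_def[symmetric] distr_comp_eq_self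
        measurable_comp[OF shear_ji(1) shear_ij(1)] shear_ij)
qed

section \<open>The uniform measure on the sphere\<close>

lemma euclR_eq_lborel_on: "euclR P = lborel_on {..<P}"
  by (simp add: euclR_def)

lemma space_euclR: "space (euclR P) = (\<Pi>\<^sub>E k\<in>{..<P}. UNIV)"
  by (simp add: euclR_def space_PiM)

lemma borel_measurable_lborel_on_component [measurable]:
  "k \<in> I \<Longrightarrow> (\<lambda>x. x k) \<in> borel_measurable (lborel_on I)"
  using measurable_component_singleton[of k I "\<lambda>_. lborel"] by simp

lemma borel_measurable_euclR_component [measurable]:
  "k < P \<Longrightarrow> (\<lambda>x. x k) \<in> borel_measurable (euclR P)"
  by (simp add: euclR_eq_lborel_on)

lemma measurable_euclR_component [measurable]:
  "f \<in> M \<rightarrow>\<^sub>M euclR P \<Longrightarrow> k < P \<Longrightarrow> (\<lambda>x. f x k) \<in> borel_measurable M"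
  using measurable_compose[OF _ borel_measurable_euclR_component] by blast

lemma borel_measurable_inprod [measurable]:
  "f \<in> M \<rightarrow>\<^sub>M euclR P \<Longrightarrow> g \<in> M \<rightarrow>\<^sub>M euclR P \<Longrightarrow> (\<lambda>x. inprod P (f x) (g x)) \<in> borel_measurable M"
  unfolding inprod_def
  by (intro borel_measurable_sum borel_measurable_times measurable_euclR_component) auto

lemma borel_measurable_inprod_left [measurable]:
  "(\<lambda>x. inprod P x w) \<in> borel_measurable (euclR P)"
  unfolding inprod_def by measurable

lemma borel_measurable_enorm [measurable]:
  "f \<in> M \<rightarrow>\<^sub>M euclR P \<Longrightarrow> (\<lambda>x. enorm P (f x)) \<in> borel_measurable M"
  unfolding enorm_def by measurable

lemma measurable_normalize_vec [measurable]: "normalize_vec P \<in> euclR P \<rightarrow>\<^sub>M euclR P"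
  unfolding normalize_vec_def
  by (subst (2) euclR_def, rule measurable_restrict) (simp add: measurable_lborel1)

lemma unit_ball_in_sets [measurable]: "unit_ball P \<in> sets (euclR P)"
  unfolding unit_ball_def by measurable

lemma inprod_self_nonneg: "0 \<le> inprod P x x"
  unfolding inprod_def by (auto intro: sum_nonneg)

lemma enorm_power2: "(enorm P x)\<^sup>2 = inprod P x x"
  unfolding enorm_def using inprod_self_nonneg[of P x] by simp

lemma enorm_nonneg: "0 \<le> enorm P x"
  unfolding enorm_def using inprod_self_nonneg[of P x] by simp

lemma enorm_le_1_iff: "enorm P x \<le> 1 \<longleftrightarrow> inprod P x x \<le> 1"
  unfolding enorm_def by simp

lemma component_power2_le_inprod: "k < P \<Longrightarrow> (x k)\<^sup>2 \<le> inprod P x x"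
  unfolding inprod_def power2_eq_square by (rule member_le_sum) auto

lemma abs_component_le_1: "k < P \<Longrightarrow> enorm P x \<le> 1 \<Longrightarrow> \<bar>x k\<bar> \<le> 1"
  using component_power2_le_inprod[of k P x] enorm_le_1_iff[of P x] abs_square_le_1
  by (metis order_trans)

lemma emeasure_unit_ball_finite: "emeasure (euclR P) (unit_ball P) < \<infinity>"
proof -
  have "unit_ball P \<subseteq> (\<Pi>\<^sub>E k\<in>{..<P}. {-1..1})"
    by (auto simp: unit_ball_def space_euclR PiE_def Pi_def abs_le_iff dest!: abs_component_le_1)
  then have "emeasure (euclR P) (unit_ball P) \<le> emeasure (euclR P) (\<Pi>\<^sub>E k\<in>{..<P}. {-1..1::real})"
    by (rule emeasure_mono) (simp add: euclR_def)
  also have "\<dots> = ennreal 2 ^ P"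
    by (simp add: euclR_eq_lborel_on emeasure_lborel_on_PiE)
  finally show ?thesis by (simp add: power_less_top_ennreal le_less_trans)
qed

lemma emeasure_unit_ball_nonzero:
  assumes P: "0 < P"
  shows "emeasure (euclR P) (unit_ball P) \<noteq> 0"
proof -
  have cube: "(\<Pi>\<^sub>E k\<in>{..<P}. {-1/P..1/P}) \<subseteq> unit_ball P"
  proof
    fix x assume x: "x \<in> (\<Pi>\<^sub>E k\<in>{..<P}. {-1/real P..1/P})"
    have "inprod P x x \<le> (\<Sum>k<P. (1/real P)\<^sup>2)"
      unfolding inprod_def
    proof (rule sum_mono)
      fix k assume "k \<in> {..<P}"
      then have "\<bar>x k\<bar> \<le> 1/P" using x by (auto simp: PiE_def Pi_def abs_le_iff)
      then show "x k * x k \<le> (1/real P)\<^sup>2"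
        by (metis abs_ge_zero power2_eq_square power_mono power2_abs)
    qed
    also have "\<dots> \<le> 1" using P by (simp add: power2_eq_square)
    finally show "x \<in> unit_ball P"
      using x by (auto simp: unit_ball_def space_euclR PiE_def enorm_le_1_iff)
  qed
  have "0 < emeasure (euclR P) (\<Pi>\<^sub>E k\<in>{..<P}. {-1/P..1/P})"
    using P by (simp add: euclR_eq_lborel_on emeasure_lborel_on_PiE ennreal_power)
  also have "\<dots> \<le> emeasure (euclR P) (unit_ball P)"
    by (rule emeasure_mono[OF cube]) simp
  finally show ?thesis by simp
qed

lemma sets_sphere_unif [simp, measurable_cong]: "sets (sphere_unif P) = sets (euclR P)"
  by (simp add: sphere_unif_def)

lemma space_sphere_unif [simp]: "space (sphere_unif P) = space (euclR P)"
  by (simp add: sphere_unif_def)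

lemma prob_space_sphere_unif: "0 < P \<Longrightarrow> prob_space (sphere_unif P)"
  unfolding sphere_unif_def
  using emeasure_unit_ball_finite[of P]
  by (intro prob_space.prob_space_distr prob_space_uniform_measure emeasure_unit_ball_nonzero)
     (auto simp: less_top)

lemma distr_uniform_measure_unit_ball_invariant:
  assumes G[measurable]: "G \<in> euclR P \<rightarrow>\<^sub>M euclR P"
    and G_distr: "distr (euclR P) (euclR P) G = euclR P"
    and G_enorm: "\<And>x. x \<in> space (euclR P) \<Longrightarrow> enorm P (G x) = enorm P x"
  shows "distr (uniform_measure (euclR P) (unit_ball P)) (euclR P) G = uniform_measure (euclR P) (unit_ball P)"
    (is "distr ?U _ G = ?U")
proof (rule measure_eqI)
  fix A assume "A \<in> sets (distr ?U (euclR P) G)"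
  then have A[measurable]: "A \<in> sets (euclR P)" by simp
  have preimage: "G -` (unit_ball P \<inter> A) \<inter> space (euclR P) = unit_ball P \<inter> (G -` A \<inter> space (euclR P))"
    using measurable_space[OF G] G_enorm by (auto simp: unit_ball_def)
  have "emeasure (distr ?U (euclR P) G) A
      = emeasure (euclR P) (unit_ball P \<inter> (G -` A \<inter> space (euclR P))) / emeasure (euclR P) (unit_ball P)"
    by (simp add: emeasure_distr emeasure_uniform_measure)
  also have "emeasure (euclR P) (unit_ball P \<inter> (G -` A \<inter> space (euclR P)))
      = emeasure (euclR P) (G -` (unit_ball P \<inter> A) \<inter> space (euclR P))"
    by (simp only: preimage)
  also have "\<dots> = emeasure (distr (euclR P) (euclR P) G) (unit_ball P \<inter> A)"
    by (rule emeasure_distr[symmetric]) simp_all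
  finally show "emeasure (distr ?U (euclR P) G) A = emeasure ?U A"
    by (simp add: G_distr emeasure_uniform_measure)
qed simp

lemma distr_sphere_unif_invariant:
  assumes G[measurable]: "G \<in> euclR P \<rightarrow>\<^sub>M euclR P"
    and G_distr: "distr (euclR P) (euclR P) G = euclR P"
    and G_enorm: "\<And>x. x \<in> space (euclR P) \<Longrightarrow> enorm P (G x) = enorm P x"
    and G_normalize: "\<And>x. x \<in> space (euclR P) \<Longrightarrow> G (normalize_vec P x) = normalize_vec P (G x)"
  shows "distr (sphere_unif P) (euclR P) G = sphere_unif P"
proof -
  let ?U = "uniform_measure (euclR P) (unit_ball P)"
  have "distr (sphere_unif P) (euclR P) G = distr ?U (euclR P) (G \<circ> normalize_vec P)"
    unfolding sphere_unif_def by (rule distr_distr) simp_all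
  also have "\<dots> = distr ?U (euclR P) (normalize_vec P \<circ> G)"
    by (rule distr_cong) (simp_all add: G_normalize)
  also have "\<dots> = distr (distr ?U (euclR P) G) (euclR P) (normalize_vec P)"
    by (rule distr_distr[symmetric]) simp_all
  also have "\<dots> = sphere_unif P"
    by (simp add: distr_uniform_measure_unit_ball_invariant[OF G G_distr G_enorm] sphere_unif_def)
  finally show ?thesis .
qed

lemma integral_sphere_unif_invariant:
  fixes h :: "(nat \<Rightarrow> real) \<Rightarrow> real"
  assumes G: "G \<in> euclR P \<rightarrow>\<^sub>M euclR P" and G_distr: "distr (sphere_unif P) (euclR P) G = sphere_unif P"
    and h: "h \<in> borel_measurable (euclR P)"
  shows "(\<integral>x. h (G x) \<partial>sphere_unif P) = (\<integral>x. h x \<partial>sphere_unif P)"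
proof -
  have "(\<integral>x. h (G x) \<partial>sphere_unif P) = (\<integral>x. h x \<partial>distr (sphere_unif P) (euclR P) G)"
    using G h by (simp add: integral_distr)
  then show ?thesis by (simp add: G_distr)
qed

lemma sum_remove_two:
  fixes P :: nat
  assumes "i < P" "j < P" "i \<noteq> j"
  shows "(\<Sum>k<P. f k) = f i + f j + (\<Sum>k\<in>{..<P} - {i} - {j}. f k)"
proof -
  have "(\<Sum>k<P. f k) = f i + (\<Sum>k\<in>{..<P} - {i}. f k)"
    using assms by (subst sum.remove[of "{..<P}" i]) auto
  also have "(\<Sum>k\<in>{..<P} - {i}. f k) = f j + (\<Sum>k\<in>{..<P} - {i} - {j}. f k)"
    using assms by (subst sum.remove[of "{..<P} - {i}" j]) auto
  finally show ?thesis by (simp add: add.assoc)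
qed

lemma measurable_plane_rotation:
  "i < P \<Longrightarrow> j < P \<Longrightarrow> plane_rotation i j c s \<in> euclR P \<rightarrow>\<^sub>M euclR P"
  unfolding euclR_eq_lborel_on
proof (rule measurable_PiM_single')
  fix k assume "i < P" "j < P" "k \<in> {..<P}"
  then show "(\<lambda>x. plane_rotation i j c s x k) \<in> lborel_on {..<P} \<rightarrow>\<^sub>M lborel"
    unfolding plane_rotation_def by (cases "k = j"; cases "k = i") simp_all
next
  assume "i < P" "j < P"
  then show "plane_rotation i j c s \<in> space (lborel_on {..<P}) \<rightarrow> (\<Pi>\<^sub>E i\<in>{..<P}. space lborel)"
    by (auto simp: space_PiM PiE_def extensional_def plane_rotation_def)
qed

lemma inprod_plane_rotation:
  assumes "i < P" "j < P" "i \<noteq> j" "c\<^sup>2 + s\<^sup>2 = 1"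
  shows "inprod P (plane_rotation i j c s x) (plane_rotation i j c s x) = inprod P x x"
proof -
  have "inprod P (plane_rotation i j c s x) (plane_rotation i j c s x) =
     (c * x i + s * x j) * (c * x i + s * x j) + (- s * x i + c * x j) * (- s * x i + c * x j)
     + (\<Sum>k\<in>{..<P} - {i} - {j}. x k * x k)"
    unfolding inprod_def using assms
    by (subst sum_remove_two[of i P j]) (auto simp: plane_rotation_def intro!: sum.cong)
  also have "(c * x i + s * x j) * (c * x i + s * x j) + (- s * x i + c * x j) * (- s * x i + c * x j)
      = (c\<^sup>2 + s\<^sup>2) * (x i * x i + x j * x j)"
    by (simp add: power2_eq_square algebra_simps)
  finally show ?thesis
    unfolding inprod_def using assms by (subst (2) sum_remove_two[of i P j]) auto
qed

lemma enorm_plane_rotation: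
  "i < P \<Longrightarrow> j < P \<Longrightarrow> i \<noteq> j \<Longrightarrow> c\<^sup>2 + s\<^sup>2 = 1 \<Longrightarrow> enorm P (plane_rotation i j c s x) = enorm P x"
  by (simp add: enorm_def inprod_plane_rotation)

lemma plane_rotation_normalize_vec:
  assumes "i < P" "j < P" "i \<noteq> j" "c\<^sup>2 + s\<^sup>2 = 1"
  shows "plane_rotation i j c s (normalize_vec P x) = normalize_vec P (plane_rotation i j c s x)"
  using assms enorm_plane_rotation[OF assms, of x]
  by (auto simp: plane_rotation_def normalize_vec_def fun_eq_iff add_divide_distrib diff_divide_distrib)

lemma distr_sphere_unif_plane_rotation:
  assumes "i < P" "j < P" "i \<noteq> j" "c\<^sup>2 + s\<^sup>2 = 1"
  shows "distr (sphere_unif P) (euclR P) (plane_rotation i j c s) = sphere_unif P"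
  using assms
  by (intro distr_sphere_unif_invariant measurable_plane_rotation)
     (simp_all add: euclR_eq_lborel_on distr_lborel_on_plane_rotation enorm_plane_rotation
       plane_rotation_normalize_vec)

lemma measurable_coord_flip_euclR: "i < P \<Longrightarrow> coord_flip i \<in> euclR P \<rightarrow>\<^sub>M euclR P"
  unfolding euclR_eq_lborel_on by (simp add: measurable_coord_flip)

lemma inprod_coord_flip: "i < P \<Longrightarrow> inprod P (coord_flip i x) (coord_flip i x) = inprod P x x"
proof -
  assume i: "i < P"
  have "inprod P (coord_flip i x) (coord_flip i x) = (- x i) * (- x i) + (\<Sum>k\<in>{..<P} - {i}. x k * x k)"
    unfolding inprod_def coord_flip_def using i by (subst sum.remove[of _ i]) (auto intro!: sum.cong)
  also have "\<dots> = inprod P x x"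
    unfolding inprod_def using i by (subst (2) sum.remove[of _ i]) auto
  finally show ?thesis .
qed

lemma distr_sphere_unif_coord_flip:
  assumes "i < P"
  shows "distr (sphere_unif P) (euclR P) (coord_flip i) = sphere_unif P"
proof -
  have enorm_flip: "enorm P (coord_flip i x) = enorm P x" for x
    using assms by (simp add: enorm_def inprod_coord_flip)
  moreover have "coord_flip i (normalize_vec P x) = normalize_vec P (coord_flip i x)" for x
    using assms enorm_flip[of x] by (auto simp: coord_flip_def normalize_vec_def fun_eq_iff)
  ultimately show ?thesis
    using assms
    by (intro distr_sphere_unif_invariant)
       (simp_all add: measurable_coord_flip euclR_eq_lborel_on distr_lborel_on_coord_flip)
qed

section \<open>Linear forms of a uniform vector on the sphere\<close>

definition merge_coords :: "nat \<Rightarrow> nat \<Rightarrow> (nat \<Rightarrow> real) \<Rightarrow> (nat \<Rightarrow> real)" where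
  "merge_coords i j v = v(i := sqrt ((v i)\<^sup>2 + (v j)\<^sup>2), j := 0)"

lemma inprod_merge_coords_self:
  assumes "i < P" "j < P" "i \<noteq> j"
  shows "inprod P (merge_coords i j v) (merge_coords i j v) = inprod P v v"
proof -
  have "inprod P (merge_coords i j v) (merge_coords i j v)
      = (v i)\<^sup>2 + (v j)\<^sup>2 + (\<Sum>k\<in>{..<P} - {i} - {j}. v k * v k)"
    unfolding inprod_def using assms
    by (subst sum_remove_two[of i P j]) (auto simp: merge_coords_def intro!: sum.cong)
  also have "\<dots> = inprod P v v"
    unfolding inprod_def using assms by (subst sum_remove_two[of i P j]) (auto simp: power2_eq_square)
  finally show ?thesis .
qed

text \<open>A rotation in the \<open>(i, j)\<close>-plane moves the weight of \<open>v j\<close> onto \<open>v i\<close>.\<close>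

lemma integral_sphere_unif_inprod_merge_coords:
  fixes f :: "real \<Rightarrow> real"
  assumes ij: "i < P" "j < P" "i \<noteq> j" and f[measurable]: "f \<in> borel_measurable borel"
  shows "(\<integral>x. f (inprod P x v) \<partial>sphere_unif P) = (\<integral>x. f (inprod P x (merge_coords i j v)) \<partial>sphere_unif P)"
proof (cases "(v i)\<^sup>2 + (v j)\<^sup>2 = 0")
  case True
  then have "merge_coords i j v = v"
    by (auto simp: merge_coords_def fun_eq_iff sum_power2_eq_zero_iff)
  then show ?thesis by simp
next
  case False
  define r where "r = sqrt ((v i)\<^sup>2 + (v j)\<^sup>2)"
  define c where "c = v i / r"
  define s where "s = v j / r"
  have r: "r \<noteq> 0" "r\<^sup>2 = (v i)\<^sup>2 + (v j)\<^sup>2"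
    using False by (simp_all add: r_def)
  have cs: "c\<^sup>2 + s\<^sup>2 = 1"
    using r False by (simp add: c_def s_def power_divide add_divide_distrib[symmetric])
  have rotate: "inprod P x v = inprod P (plane_rotation i j c s x) (merge_coords i j v)" for x
  proof -
    have "inprod P x v = x i * v i + x j * v j + (\<Sum>k\<in>{..<P} - {i} - {j}. x k * v k)"
      unfolding inprod_def using ij by (rule sum_remove_two)
    also have "\<dots> = (c * x i + s * x j) * r + (- s * x i + c * x j) * 0 + (\<Sum>k\<in>{..<P} - {i} - {j}. x k * v k)"
      using r(1) by (simp add: c_def s_def algebra_simps)
    also have "\<dots> = inprod P (plane_rotation i j c s x) (merge_coords i j v)"
      unfolding inprod_def using ij
      by (subst sum_remove_two[of i P j]) (auto simp: plane_rotation_def merge_coords_def r_def intro!: sum.cong)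
    finally show ?thesis .
  qed
  have "(\<integral>x. f (inprod P (plane_rotation i j c s x) (merge_coords i j v)) \<partial>sphere_unif P)
      = (\<integral>x. f (inprod P x (merge_coords i j v)) \<partial>sphere_unif P)"
    using ij cs
    by (intro integral_sphere_unif_invariant measurable_plane_rotation distr_sphere_unif_plane_rotation) simp_all
  then show ?thesis by (simp add: rotate)
qed

lemma integral_sphere_unif_inprod_coord0:
  fixes f :: "real \<Rightarrow> real"
  assumes P: "0 < P" and f[measurable]: "f \<in> borel_measurable borel"
    and v: "\<And>k. 0 < k \<Longrightarrow> k < P \<Longrightarrow> v k = 0"
  shows "(\<integral>x. f (inprod P x v) \<partial>sphere_unif P) = (\<integral>x. f (enorm P v * x 0) \<partial>sphere_unif P)"
proof -
  have inprod_v: "inprod P x v = x 0 * v 0" for x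
  proof -
    have "inprod P x v = x 0 * v 0 + (\<Sum>k\<in>{..<P} - {0}. x k * v k)"
      unfolding inprod_def using P by (subst sum.remove[of _ 0]) auto
    also have "(\<Sum>k\<in>{..<P} - {0}. x k * v k) = 0" using v by (auto intro!: sum.neutral)
    finally show ?thesis by simp
  qed
  have enorm_v: "enorm P v = \<bar>v 0\<bar>"
    unfolding enorm_def inprod_v by (simp add: real_sqrt_mult_self)
  show ?thesis
  proof (cases "0 \<le> v 0")
    case True
    then show ?thesis by (simp add: inprod_v enorm_v mult.commute)
  next
    case False
    have "(\<integral>x. f (enorm P v * coord_flip 0 x 0) \<partial>sphere_unif P) = (\<integral>x. f (enorm P v * x 0) \<partial>sphere_unif P)"
      using P by (intro integral_sphere_unif_invariant measurable_coord_flip_euclR distr_sphere_unif_coord_flip) simp_all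
    then show ?thesis
      using False by (simp add: inprod_v enorm_v coord_flip_def mult.commute)
  qed
qed

lemma integral_sphere_unif_inprod:
  fixes f :: "real \<Rightarrow> real"
  assumes P: "0 < P" and f[measurable]: "f \<in> borel_measurable borel"
  shows "(\<integral>x. f (inprod P x v) \<partial>sphere_unif P) = (\<integral>x. f (enorm P v * x 0) \<partial>sphere_unif P)"
proof -
  have reduce: "(\<integral>x. f (inprod P x v) \<partial>sphere_unif P) = (\<integral>x. f (enorm P v * x 0) \<partial>sphere_unif P)"
    if "m < P" "\<And>k. m < k \<Longrightarrow> k < P \<Longrightarrow> v k = 0" for m v
    using that
  proof (induction m arbitrary: v)
    case 0
    then show ?case by (intro integral_sphere_unif_inprod_coord0[OF P f]) auto
  next
    case (Suc m)
    let ?w = "merge_coords 0 (Suc m) v"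
    have "(\<integral>x. f (inprod P x v) \<partial>sphere_unif P) = (\<integral>x. f (inprod P x ?w) \<partial>sphere_unif P)"
      using Suc.prems by (intro integral_sphere_unif_inprod_merge_coords) auto
    also have "\<dots> = (\<integral>x. f (enorm P ?w * x 0) \<partial>sphere_unif P)"
      using Suc.prems by (intro Suc.IH) (auto simp: merge_coords_def)
    also have "enorm P ?w = enorm P v"
      using Suc.prems by (simp add: enorm_def inprod_merge_coords_self)
    finally show ?case .
  qed
  show ?thesis using P by (intro reduce[of "P - 1"]) auto
qed

lemma AE_euclR_component0_nonzero:
  assumes P: "0 < P"
  shows "AE y in euclR P. y 0 \<noteq> 0"
proof (rule AE_I')
  let ?N = "\<Pi>\<^sub>E k\<in>{..<P}. if k = 0 then {0} else (UNIV :: real set)"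
  have "emeasure (euclR P) ?N = (\<Prod>k\<in>{..<P}. emeasure lborel (if k = 0 then {0} else (UNIV :: real set)))"
    unfolding euclR_eq_lborel_on by (rule emeasure_lborel_on_PiE) auto
  also have "\<dots> = 0" using P by (intro prod_zero) (auto intro!: bexI[of _ 0])
  finally show "?N \<in> null_sets (euclR P)" by (auto simp: null_sets_def euclR_eq_lborel_on)
  show "{x \<in> space (euclR P). \<not> x 0 \<noteq> 0} \<subseteq> ?N"
    by (auto simp: space_euclR PiE_def Pi_def)
qed

lemma inprod_normalize_vec_self:
  assumes "inprod P x x \<noteq> 0"
  shows "inprod P (normalize_vec P x) (normalize_vec P x) = 1"
proof -
  have "inprod P (normalize_vec P x) (normalize_vec P x) = (\<Sum>k<P. x k * x k) / (enorm P x)\<^sup>2"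
    unfolding inprod_def normalize_vec_def by (simp add: sum_divide_distrib power2_eq_square)
  then show ?thesis using assms by (simp add: enorm_power2 inprod_def)
qed

lemma AE_sphere_unif_inprod_self:
  assumes P: "0 < P"
  shows "AE x in sphere_unif P. inprod P x x = 1"
proof -
  have "AE y in uniform_measure (euclR P) (unit_ball P). inprod P (normalize_vec P y) (normalize_vec P y) = 1"
  proof (rule AE_uniform_measureI)
    show "AE y in euclR P. y \<in> unit_ball P \<longrightarrow> inprod P (normalize_vec P y) (normalize_vec P y) = 1"
      using AE_euclR_component0_nonzero[OF P]
    proof eventually_elim
      case (elim y)
      then have "0 < (y 0)\<^sup>2" by simp
      also have "\<dots> \<le> inprod P y y" by (rule component_power2_le_inprod[OF P])
      finally show ?case by (simp add: inprod_normalize_vec_self)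
    qed
  qed simp
  moreover have "normalize_vec P \<in> uniform_measure (euclR P) (unit_ball P) \<rightarrow>\<^sub>M euclR P"
    by measurable
  ultimately show ?thesis
    unfolding sphere_unif_def by (subst AE_distr_iff) simp_all
qed

lemma AE_sphere_unif_abs_component_le_1:
  "0 < P \<Longrightarrow> AE x in sphere_unif P. \<forall>k<P. \<bar>x k\<bar> \<le> 1"
  by (erule AE_sphere_unif_inprod_self[THEN eventually_mono])
     (simp add: enorm_le_1_iff abs_component_le_1)

lemma integrable_sphere_unif_bounded:
  fixes g :: "(nat \<Rightarrow> real) \<Rightarrow> real"
  assumes P: "0 < P" and g: "g \<in> borel_measurable (euclR P)"
    and bounded: "\<And>x. \<forall>k<P. \<bar>x k\<bar> \<le> 1 \<Longrightarrow> \<bar>g x\<bar> \<le> B"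
  shows "integrable (sphere_unif P) g"
proof -
  interpret prob_space "sphere_unif P" by (rule prob_space_sphere_unif[OF P])
  show ?thesis
  proof (rule integrable_const_bound)
    show "AE x in sphere_unif P. norm (g x) \<le> B"
      using AE_sphere_unif_abs_component_le_1[OF P] by eventually_elim (simp add: bounded)
  qed (use g in measurable)
qed

lemma inprod_uminus_right: "inprod P x (\<lambda>k. - v k) = - inprod P x v"
  unfolding inprod_def by (simp add: sum_negf)

lemma inprod_add_right: "inprod P x (\<lambda>k. u k + v k) = inprod P x u + inprod P x v"
  unfolding inprod_def by (simp add: distrib_left sum.distrib)

lemma inprod_diff_right: "inprod P x (\<lambda>k. u k - v k) = inprod P x u - inprod P x v"
  unfolding inprod_def by (simp add: right_diff_distrib sum_subtractf)

lemma enorm_uminus: "enorm P (\<lambda>k. - v k) = enorm P v"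
  unfolding enorm_def inprod_def by simp

lemma integral_sphere_unif_odd:
  fixes f :: "real \<Rightarrow> real"
  assumes P: "0 < P" and f: "f \<in> borel_measurable borel" and odd: "\<And>t. f (- t) = - f t"
  shows "(\<integral>x. f (inprod P x v) \<partial>sphere_unif P) = 0"
proof -
  have "(\<integral>x. f (inprod P x v) \<partial>sphere_unif P) = (\<integral>x. f (inprod P x (\<lambda>k. - v k)) \<partial>sphere_unif P)"
    by (simp add: integral_sphere_unif_inprod[OF P f] enorm_uminus)
  also have "\<dots> = - (\<integral>x. f (inprod P x v) \<partial>sphere_unif P)"
    by (simp add: inprod_uminus_right odd)
  finally show ?thesis by simp
qed

lemma integral_sphere_unif_inprod_power:
  assumes P: "0 < P"
  shows "(\<integral>x. (inprod P x v) ^ n \<partial>sphere_unif P) = (enorm P v) ^ n * (\<integral>x. (x 0) ^ n \<partial>sphere_unif P)"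
  by (simp add: integral_sphere_unif_inprod[OF P, where f = "\<lambda>t. t ^ n"] power_mult_distrib)

definition unit_vec :: "nat \<Rightarrow> nat \<Rightarrow> real" where
  "unit_vec k = (\<lambda>j. if j = k then 1 else 0)"

lemma inprod_unit_vec: "k < P \<Longrightarrow> inprod P x (unit_vec k) = x k"
  unfolding inprod_def unit_vec_def by (simp add: if_distrib sum.delta' cong: if_cong)

lemma enorm_unit_vec: "k < P \<Longrightarrow> enorm P (unit_vec k) = 1"
  using inprod_unit_vec[of k P "unit_vec k"] by (simp add: enorm_def unit_vec_def)

lemma integral_sphere_unif_component_power:
  "0 < P \<Longrightarrow> k < P \<Longrightarrow> (\<integral>x. (x k) ^ n \<partial>sphere_unif P) = (\<integral>x. (x 0) ^ n \<partial>sphere_unif P)"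
  using integral_sphere_unif_inprod_power[of P "unit_vec k" n]
  by (simp add: inprod_unit_vec enorm_unit_vec)

lemma integral_sphere_unif_component0_power2:
  assumes P: "0 < P"
  shows "(\<integral>x. (x 0)\<^sup>2 \<partial>sphere_unif P) = 1 / P"
proof -
  interpret prob_space "sphere_unif P" by (rule prob_space_sphere_unif[OF P])
  have integrable: "integrable (sphere_unif P) (\<lambda>x. (x k)\<^sup>2)" if k: "k < P" for k
  proof (rule integrable_sphere_unif_bounded[OF P, where B = 1])
    show "(\<lambda>x. (x k)\<^sup>2) \<in> borel_measurable (euclR P)" using k by measurable
    fix x :: "nat \<Rightarrow> real" assume "\<forall>i<P. \<bar>x i\<bar> \<le> 1"
    then show "\<bar>(x k)\<^sup>2\<bar> \<le> 1" using k by (simp add: abs_square_le_1)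
  qed
  have "(\<integral>x. inprod P x x \<partial>sphere_unif P) = (\<integral>x. 1 \<partial>sphere_unif P)"
    using AE_sphere_unif_inprod_self[OF P] by (intro integral_cong_AE) simp_all
  then have "1 = (\<integral>x. inprod P x x \<partial>sphere_unif P)"
    using prob_space by simp
  also have "\<dots> = (\<Sum>k<P. (\<integral>x. (x k)\<^sup>2 \<partial>sphere_unif P))"
    unfolding inprod_def power2_eq_square[symmetric] by (rule Bochner_Integration.integral_sum) (simp add: integrable)
  also have "\<dots> = (\<Sum>k<P. (\<integral>x. (x 0)\<^sup>2 \<partial>sphere_unif P))"
    by (intro sum.cong refl integral_sphere_unif_component_power[OF P]) simp
  finally show ?thesis using P by (simp add: field_simps)
qed

lemma abs_power_le_power: "\<bar>a\<bar> \<le> b \<Longrightarrow> \<bar>(a::real) ^ n\<bar> \<le> b ^ n"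
  by (simp add: power_abs power_mono)

lemma abs_power4_le_16:
  fixes a b :: real
  assumes a: "\<bar>a\<bar> \<le> 1" and b: "\<bar>b\<bar> \<le> 1"
  shows "\<bar>(a + b) ^ 4\<bar> \<le> 16" and "\<bar>(a - b) ^ 4\<bar> \<le> 16" and "\<bar>a ^ 4\<bar> \<le> 16"
    and "\<bar>a\<^sup>2 * b\<^sup>2\<bar> \<le> 16"
proof -
  have "\<bar>a + b\<bar> \<le> 2" "\<bar>a - b\<bar> \<le> 2" using a b by arith+
  from this[THEN abs_power_le_power, of 4]
  show "\<bar>(a + b) ^ 4\<bar> \<le> 16" and "\<bar>(a - b) ^ 4\<bar> \<le> 16" by simp_all
  have "\<bar>a ^ 4\<bar> \<le> 1"
    using abs_power_le_power[OF a, of 4] by (simp only: power_one)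
  then show "\<bar>a ^ 4\<bar> \<le> 16" by linarith
  have "\<bar>a\<^sup>2 * b\<^sup>2\<bar> \<le> 1"
    using abs_power_le_power[OF a, of 2] abs_power_le_power[OF b, of 2]
    by (simp only: abs_mult power_one) (rule mult_le_one; simp)
  then show "\<bar>a\<^sup>2 * b\<^sup>2\<bar> \<le> 16" by linarith
qed

text \<open>Comparing the fourth moments of \<open>x\<^sub>k + x\<^sub>j\<close> and \<open>x\<^sub>k - x\<^sub>j\<close> (both distributed as \<open>\<surd>2 x\<^sub>0\<close>)
  with those of \<open>x\<^sub>k\<close> and \<open>x\<^sub>j\<close>.\<close>

lemma integral_sphere_unif_component_power2_mult:
  assumes P: "0 < P" and k: "k < P" and j: "j < P" and kj: "k \<noteq> j"
  shows "(\<integral>x. (x k)\<^sup>2 * (x j)\<^sup>2 \<partial>sphere_unif P) = (\<integral>x. (x 0) ^ 4 \<partial>sphere_unif P) / 3"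
proof -
  define a where "a = (\<integral>x. (x 0) ^ 4 \<partial>sphere_unif P)"
  have integrable: "integrable (sphere_unif P) g"
    if "g \<in> borel_measurable (euclR P)" "\<And>x. \<bar>x k\<bar> \<le> 1 \<Longrightarrow> \<bar>x j\<bar> \<le> 1 \<Longrightarrow> \<bar>g x\<bar> \<le> 16"
    for g :: "(nat \<Rightarrow> real) \<Rightarrow> real"
    by (rule integrable_sphere_unif_bounded[OF P that(1)]) (use k j in \<open>auto intro!: that(2)\<close>)
  have [simp]:
    "integrable (sphere_unif P) (\<lambda>x. (x k + x j) ^ 4)" "integrable (sphere_unif P) (\<lambda>x. (x k - x j) ^ 4)"
    "integrable (sphere_unif P) (\<lambda>x. (x k) ^ 4)" "integrable (sphere_unif P) (\<lambda>x. (x j) ^ 4)"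
    "integrable (sphere_unif P) (\<lambda>x. (x k)\<^sup>2 * (x j)\<^sup>2)"
    using k j by (intro integrable abs_power4_le_16; simp)+
  have fourth_moment_2: "(\<integral>x. (inprod P x w) ^ 4 \<partial>sphere_unif P) = 4 * a"
    if "inprod P w w = 2" for w
  proof -
    have "(enorm P w) ^ 4 = ((enorm P w)\<^sup>2)\<^sup>2" by simp
    then have "(enorm P w) ^ 4 = 4" by (simp add: enorm_power2 that)
    then show ?thesis by (simp add: integral_sphere_unif_inprod_power[OF P] a_def)
  qed
  let ?u = "\<lambda>i. unit_vec k i + unit_vec j i" and ?w = "\<lambda>i. unit_vec k i - unit_vec j i"
  have "8 * a = (\<integral>x. (x k + x j) ^ 4 \<partial>sphere_unif P) + (\<integral>x. (x k - x j) ^ 4 \<partial>sphere_unif P)"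
  proof -
    have "inprod P ?u ?u = 2" "inprod P ?w ?w = 2"
      using k j kj by (simp_all add: inprod_add_right inprod_diff_right inprod_unit_vec, simp_all add: unit_vec_def)
    from this[THEN fourth_moment_2] show ?thesis
      using k j by (simp add: inprod_add_right inprod_diff_right inprod_unit_vec)
  qed
  also have "\<dots> = (\<integral>x. (x k + x j) ^ 4 + (x k - x j) ^ 4 \<partial>sphere_unif P)"
    by simp
  also have "\<dots> = (\<integral>x. 2 * (x k) ^ 4 + 12 * ((x k)\<^sup>2 * (x j)\<^sup>2) + 2 * (x j) ^ 4 \<partial>sphere_unif P)"
    by (simp add: power2_eq_square power4_eq_xxxx algebra_simps)
  also have "\<dots> = 4 * a + 12 * (\<integral>x. (x k)\<^sup>2 * (x j)\<^sup>2 \<partial>sphere_unif P)"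
    by (simp add: integral_sphere_unif_component_power[OF P k] integral_sphere_unif_component_power[OF P j] a_def)
  finally show ?thesis unfolding a_def by simp
qed

lemma integral_sphere_unif_component0_power4:
  assumes P: "0 < P"
  shows "(\<integral>x. (x 0) ^ 4 \<partial>sphere_unif P) = 3 / (P * (P + 2))"
proof -
  interpret prob_space "sphere_unif P" by (rule prob_space_sphere_unif[OF P])
  define a where "a = (\<integral>x. (x 0) ^ 4 \<partial>sphere_unif P)"
  have cross: "(\<integral>x. (x k)\<^sup>2 * (x j)\<^sup>2 \<partial>sphere_unif P) = (if j = k then a else a / 3)"
    if k: "k < P" and j: "j < P" for k j
  proof (cases "j = k")
    case True
    have "(x k)\<^sup>2 * (x k)\<^sup>2 = (x k) ^ 4" for x :: "nat \<Rightarrow> real"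
      by (simp add: power2_eq_square power4_eq_xxxx)
    then show ?thesis
      using True integral_sphere_unif_component_power[OF P k, of 4] by (simp add: a_def)
  next
    case False
    then show ?thesis
      using integral_sphere_unif_component_power2_mult[OF P k j] by (simp add: a_def)
  qed
  have integrable: "integrable (sphere_unif P) (\<lambda>x. (x k)\<^sup>2 * (x j)\<^sup>2)" if k: "k < P" and j: "j < P" for k j
  proof (rule integrable_sphere_unif_bounded[OF P, where B = 16])
    show "(\<lambda>x. (x k)\<^sup>2 * (x j)\<^sup>2) \<in> borel_measurable (euclR P)" using k j by measurable
  qed (use k j in \<open>blast intro: abs_power4_le_16(4)\<close>)
  have square: "(inprod P x x)\<^sup>2 = (\<Sum>k<P. \<Sum>j<P. (x k)\<^sup>2 * (x j)\<^sup>2)" for x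
    unfolding inprod_def power2_eq_square[of "sum _ _"] sum_product by (simp add: power2_eq_square)
  have "(\<integral>x. (inprod P x x)\<^sup>2 \<partial>sphere_unif P) = (\<integral>x. 1 \<partial>sphere_unif P)"
    using AE_sphere_unif_inprod_self[OF P] by (intro integral_cong_AE) (auto elim: eventually_mono)
  then have "1 = (\<integral>x. (inprod P x x)\<^sup>2 \<partial>sphere_unif P)"
    using prob_space by simp
  also have "\<dots> = (\<Sum>k<P. (\<integral>x. (\<Sum>j<P. (x k)\<^sup>2 * (x j)\<^sup>2) \<partial>sphere_unif P))"
    unfolding square
    by (rule Bochner_Integration.integral_sum) (auto intro!: Bochner_Integration.integrable_sum integrable)
  also have "\<dots> = (\<Sum>k<P. \<Sum>j<P. (\<integral>x. (x k)\<^sup>2 * (x j)\<^sup>2 \<partial>sphere_unif P))"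
    by (intro sum.cong refl Bochner_Integration.integral_sum) (simp add: integrable)
  also have "\<dots> = (\<Sum>k<P. \<Sum>j<P. (if j = k then a else a / 3))"
    by (simp add: cross)
  also have "\<dots> = (\<Sum>k<P. a + (P - 1) * (a / 3))"
  proof (rule sum.cong)
    fix k assume k: "k \<in> {..<P}"
    have "(\<Sum>j<P. (if j = k then a else a / 3)) = a + (\<Sum>j\<in>{..<P} - {k}. a / 3)"
      using k by (subst sum.remove[of _ k]) auto
    also have "\<dots> = a + (P - 1) * (a / 3)" using k by simp
    finally show "(\<Sum>j<P. (if j = k then a else a / 3)) = a + (P - 1) * (a / 3)" .
  qed simp
  also have "\<dots> = a * P * (P + 2) / 3"
    using P by (simp add: of_nat_diff field_simps)
  finally have "a * (real P * (real P + 2)) = 3" by (simp add: algebra_simps)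
  moreover have "0 < real P * (real P + 2)" using P by (intro mult_pos_pos) simp_all
  ultimately show ?thesis using P by (simp add: a_def[symmetric] eq_divide_eq)
qed

lemma integral_sphere_unif_inprod_power2:
  "0 < P \<Longrightarrow> (\<integral>x. (inprod P x v)\<^sup>2 \<partial>sphere_unif P) = (enorm P v)\<^sup>2 / P"
  by (simp add: integral_sphere_unif_inprod_power integral_sphere_unif_component0_power2)

lemma integral_sphere_unif_inprod_power4:
  "0 < P \<Longrightarrow> (\<integral>x. (inprod P x v) ^ 4 \<partial>sphere_unif P) = 3 * (enorm P v) ^ 4 / (P * (P + 2))"
  by (simp add: integral_sphere_unif_inprod_power integral_sphere_unif_component0_power4 field_simps)

section \<open>Moments of sums of independent bounded variables\<close>

lemma abs_inprod_le_sum_abs: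
  assumes "\<forall>k<P. \<bar>x k\<bar> \<le> 1"
  shows "\<bar>inprod P x v\<bar> \<le> (\<Sum>k<P. \<bar>v k\<bar>)"
proof -
  have "\<bar>inprod P x v\<bar> \<le> (\<Sum>k<P. \<bar>x k * v k\<bar>)" unfolding inprod_def by (rule sum_abs)
  also have "\<dots> \<le> (\<Sum>k<P. \<bar>v k\<bar>)"
    using assms by (intro sum_mono) (simp add: abs_mult mult_left_le_one_le)
  finally show ?thesis .
qed

lemma (in prob_space) integrable_power_of_AE_bounded:
  fixes X :: "'a \<Rightarrow> real"
  assumes "X \<in> borel_measurable M" and "AE \<omega> in M. \<bar>X \<omega>\<bar> \<le> B"
  shows "integrable M (\<lambda>\<omega>. X \<omega> ^ k)"
proof (rule integrable_const_bound[where B = "\<bar>B\<bar> ^ k"])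
  show "AE \<omega> in M. norm (X \<omega> ^ k) \<le> \<bar>B\<bar> ^ k"
    using assms(2) by eventually_elim (auto simp: power_abs intro!: power_mono)
qed (use assms(1) in simp)

lemma (in prob_space) expectation_indep_var_powers:
  fixes X Y :: "'a \<Rightarrow> real"
  assumes ind: "indep_var borel X borel Y"
    and X: "AE \<omega> in M. \<bar>X \<omega>\<bar> \<le> B1" and Y: "AE \<omega> in M. \<bar>Y \<omega>\<bar> \<le> B2"
  shows "expectation (\<lambda>\<omega>. X \<omega> ^ j * Y \<omega> ^ k) = expectation (\<lambda>\<omega>. X \<omega> ^ j) * expectation (\<lambda>\<omega>. Y \<omega> ^ k)"
proof -
  have "indep_var borel ((\<lambda>t. t ^ j) \<circ> X) borel ((\<lambda>t. t ^ k) \<circ> Y)"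
    by (rule indep_var_compose[OF ind]) simp_all
  moreover have "integrable M (\<lambda>\<omega>. X \<omega> ^ j)" "integrable M (\<lambda>\<omega>. Y \<omega> ^ k)"
    using indep_var_rv1[OF ind] indep_var_rv2[OF ind] X Y by (simp_all add: integrable_power_of_AE_bounded)
  ultimately show ?thesis
    using indep_var_lebesgue_integral by (simp add: comp_def)
qed

lemma (in prob_space) expectation_indep_var_add_powers:
  fixes X Y :: "'a \<Rightarrow> real"
  assumes ind: "indep_var borel X borel Y"
    and X: "AE \<omega> in M. \<bar>X \<omega>\<bar> \<le> B1" and Y: "AE \<omega> in M. \<bar>Y \<omega>\<bar> \<le> B2"
    and EY: "expectation Y = 0" and EY3: "expectation (\<lambda>\<omega>. Y \<omega> ^ 3) = 0"
  shows "expectation (\<lambda>\<omega>. (X \<omega> + Y \<omega>)\<^sup>2) = expectation (\<lambda>\<omega>. (X \<omega>)\<^sup>2) + expectation (\<lambda>\<omega>. (Y \<omega>)\<^sup>2)"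
    and "expectation (\<lambda>\<omega>. (X \<omega> + Y \<omega>) ^ 4) = expectation (\<lambda>\<omega>. X \<omega> ^ 4)
          + 6 * expectation (\<lambda>\<omega>. (X \<omega>)\<^sup>2) * expectation (\<lambda>\<omega>. (Y \<omega>)\<^sup>2) + expectation (\<lambda>\<omega>. Y \<omega> ^ 4)"
proof -
  have rv[measurable]: "X \<in> borel_measurable M" "Y \<in> borel_measurable M"
    using indep_var_rv1[OF ind] indep_var_rv2[OF ind] by simp_all
  note E = expectation_indep_var_powers[OF ind X Y]
  have I: "integrable M (\<lambda>\<omega>. X \<omega> ^ j * Y \<omega> ^ k)" for j k
  proof (rule integrable_const_bound[where B = "\<bar>B1\<bar> ^ j * \<bar>B2\<bar> ^ k"])
    show "AE \<omega> in M. norm (X \<omega> ^ j * Y \<omega> ^ k) \<le> \<bar>B1\<bar> ^ j * \<bar>B2\<bar> ^ k"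
      using X Y by eventually_elim (auto simp: power_abs abs_mult intro!: power_mono mult_mono)
  qed simp
  have square: "(X \<omega> + Y \<omega>)\<^sup>2 = X \<omega> ^ 2 * Y \<omega> ^ 0 + 2 * (X \<omega> ^ 1 * Y \<omega> ^ 1) + X \<omega> ^ 0 * Y \<omega> ^ 2" for \<omega>
    by (simp add: power2_eq_square algebra_simps)
  have fourth: "(X \<omega> + Y \<omega>) ^ 4 = X \<omega> ^ 4 * Y \<omega> ^ 0 + 4 * (X \<omega> ^ 3 * Y \<omega> ^ 1) + 6 * (X \<omega> ^ 2 * Y \<omega> ^ 2)
      + 4 * (X \<omega> ^ 1 * Y \<omega> ^ 3) + X \<omega> ^ 0 * Y \<omega> ^ 4" for \<omega>
    by (simp add: power2_eq_square power3_eq_cube power4_eq_xxxx algebra_simps)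
  show "expectation (\<lambda>\<omega>. (X \<omega> + Y \<omega>)\<^sup>2) = expectation (\<lambda>\<omega>. (X \<omega>)\<^sup>2) + expectation (\<lambda>\<omega>. (Y \<omega>)\<^sup>2)"
    unfolding square using I[of 2 0] I[of 1 1] I[of 0 2] E[of 1 1] EY by simp
  show "expectation (\<lambda>\<omega>. (X \<omega> + Y \<omega>) ^ 4) = expectation (\<lambda>\<omega>. X \<omega> ^ 4)
          + 6 * expectation (\<lambda>\<omega>. (X \<omega>)\<^sup>2) * expectation (\<lambda>\<omega>. (Y \<omega>)\<^sup>2) + expectation (\<lambda>\<omega>. Y \<omega> ^ 4)"
    unfolding fourth using I[of 4 0] I[of 3 1] I[of 2 2] I[of 1 3] I[of 0 4] E[of 3 1] E[of 2 2] E[of 1 3] EY EY3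
    by simp
qed

lemma (in prob_space) nn_integral_indep_var_iterated:
  assumes ind: "indep_var S X T Y" and G[measurable]: "G \<in> borel_measurable (S \<Otimes>\<^sub>M T)"
  shows "(\<integral>\<^sup>+ \<omega>. G (X \<omega>, Y \<omega>) \<partial>M) = (\<integral>\<^sup>+ \<omega>'. (\<integral>\<^sup>+ \<omega>. G (X \<omega>, Y \<omega>') \<partial>M) \<partial>M)"
proof -
  have rX[measurable]: "X \<in> measurable M S" and rY[measurable]: "Y \<in> measurable M T"
    and eq: "distr M S X \<Otimes>\<^sub>M distr M T Y = distr M (S \<Otimes>\<^sub>M T) (\<lambda>x. (X x, Y x))"
    using ind[unfolded indep_var_distribution_eq] by auto
  interpret DX: prob_space "distr M S X" by (rule prob_space_distr[OF rX])
  interpret DY: prob_space "distr M T Y" by (rule prob_space_distr[OF rY])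
  interpret DXY: pair_sigma_finite "distr M S X" "distr M T Y" ..
  have G': "G \<in> borel_measurable (distr M S X \<Otimes>\<^sub>M distr M T Y)"
    using G by (simp add: measurable_cong_sets[OF sets_pair_measure_cong[OF sets_distr sets_distr] refl])
  have "(\<integral>\<^sup>+ \<omega>. G (X \<omega>, Y \<omega>) \<partial>M) = (\<integral>\<^sup>+ z. G z \<partial>distr M (S \<Otimes>\<^sub>M T) (\<lambda>x. (X x, Y x)))"
    by (subst nn_integral_distr) simp_all
  also have "\<dots> = (\<integral>\<^sup>+ z. G z \<partial>(distr M S X \<Otimes>\<^sub>M distr M T Y))" by (simp add: eq)
  also have "\<dots> = (\<integral>\<^sup>+ y. (\<integral>\<^sup>+ x. G (x, y) \<partial>distr M S X) \<partial>distr M T Y)"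
    by (rule DXY.nn_integral_snd[symmetric, OF G'])
  also have "\<dots> = (\<integral>\<^sup>+ \<omega>'. (\<integral>\<^sup>+ x. G (x, Y \<omega>') \<partial>distr M S X) \<partial>M)"
  proof -
    have st: "sets (T \<Otimes>\<^sub>M distr M S X) = sets (T \<Otimes>\<^sub>M S)" by (rule sets_pair_measure_cong) simp_all
    have "(\<lambda>z. G (snd z, fst z)) \<in> borel_measurable (T \<Otimes>\<^sub>M S)" by measurable
    then have Gs: "(\<lambda>z. G (snd z, fst z)) \<in> borel_measurable (T \<Otimes>\<^sub>M distr M S X)"
      using measurable_cong_sets[OF st refl] by simp
    have Fm: "(\<lambda>y. \<integral>\<^sup>+ x. G (x, y) \<partial>distr M S X) \<in> borel_measurable T"
      using DX.borel_measurable_nn_integral_fst[OF Gs] by simp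
    have Fm': "(\<lambda>y. \<integral>\<^sup>+ x. G (x, y) \<partial>distr M S X) \<in> borel_measurable (distr M T Y)"
      using measurable_cong_sets[OF sets_distr[of M T Y] refl, of borel] Fm by simp
    show ?thesis by (rule nn_integral_distr[OF rY Fm'])
  qed
  also have "\<dots> = (\<integral>\<^sup>+ \<omega>'. (\<integral>\<^sup>+ \<omega>. G (X \<omega>, Y \<omega>') \<partial>M) \<partial>M)"
  proof (rule nn_integral_cong)
    fix \<omega>' assume "\<omega>' \<in> space M"
    then have y: "Y \<omega>' \<in> space T" using measurable_space[OF rY] by blast
    show "(\<integral>\<^sup>+ x. G (x, Y \<omega>') \<partial>distr M S X) = (\<integral>\<^sup>+ \<omega>. G (X \<omega>, Y \<omega>') \<partial>M)"
      by (rule nn_integral_distr[OF rX]) (use y in measurable)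
  qed
  finally show ?thesis .
qed

section \<open>Independent uniform vectors on the sphere\<close>

lemma power2_mult_indicator_le_power4:
  fixes D \<epsilon> :: real
  assumes "0 < \<epsilon>"
  shows "D\<^sup>2 * indicator {x. \<epsilon> < \<bar>x\<bar>} D \<le> D ^ 4 / \<epsilon>\<^sup>2"
proof (cases "\<epsilon> < \<bar>D\<bar>")
  case True
  then have "\<epsilon>\<^sup>2 \<le> D\<^sup>2" using assms by (simp add: abs_le_square_iff[symmetric] less_imp_le)
  then have "D\<^sup>2 * 1 \<le> D\<^sup>2 * (D\<^sup>2 / \<epsilon>\<^sup>2)" using assms by (intro mult_left_mono) simp_all
  then show ?thesis using True by (simp add: power4_eq_xxxx power2_eq_square)
qed (simp add: indicator_def)

locale indep_sphere_vectors = prob_space M for M :: "'a measure" +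
  fixes P n :: nat and U :: "nat \<Rightarrow> 'a \<Rightarrow> nat \<Rightarrow> real"
  assumes P_pos: "0 < P" and indep: "indep_vars (\<lambda>_. euclR P) U {1..n}"
    and uniform: "\<And>i. i \<in> {1..n} \<Longrightarrow> distr M (euclR P) (U i) = sphere_unif P"
begin

lemma measurable_U [measurable]: "i \<in> {1..n} \<Longrightarrow> U i \<in> M \<rightarrow>\<^sub>M euclR P"
  using indep unfolding indep_vars_def by auto

lemma expectation_U:
  fixes g :: "(nat \<Rightarrow> real) \<Rightarrow> real"
  shows "i \<in> {1..n} \<Longrightarrow> g \<in> borel_measurable (euclR P) \<Longrightarrow>
    expectation (\<lambda>\<omega>. g (U i \<omega>)) = (\<integral>x. g x \<partial>sphere_unif P)"
  using integral_distr[OF measurable_U, of i g] uniform[of i] by simp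

lemma AE_U_bounded:
  assumes i: "i \<in> {1..n}"
  shows "AE \<omega> in M. (\<forall>k<P. \<bar>U i \<omega> k\<bar> \<le> 1) \<and> enorm P (U i \<omega>) \<le> 1"
proof -
  have "AE x in distr M (euclR P) (U i). (\<forall>k<P. \<bar>x k\<bar> \<le> 1) \<and> enorm P x \<le> 1"
    unfolding uniform[OF i]
    using AE_sphere_unif_abs_component_le_1[OF P_pos] AE_sphere_unif_inprod_self[OF P_pos]
    by eventually_elim (simp add: enorm_le_1_iff)
  then show ?thesis
    using i by (subst (asm) AE_distr_iff) measurable
qed

lemma AE_abs_inprod_U_le:
  "i \<in> {1..n} \<Longrightarrow> AE \<omega> in M. \<bar>inprod P (U i \<omega>) v\<bar> \<le> (\<Sum>k<P. \<bar>v k\<bar>)"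
  by (erule AE_U_bounded[THEN eventually_mono]) (simp add: abs_inprod_le_sum_abs)

lemma expectation_inprod_U:
  assumes i: "i \<in> {1..n}"
  shows "expectation (\<lambda>\<omega>. inprod P (U i \<omega>) v) = 0"
    and "expectation (\<lambda>\<omega>. (inprod P (U i \<omega>) v)\<^sup>2) = (enorm P v)\<^sup>2 / P"
    and "expectation (\<lambda>\<omega>. (inprod P (U i \<omega>) v) ^ 3) = 0"
    and "expectation (\<lambda>\<omega>. (inprod P (U i \<omega>) v) ^ 4) = 3 * (enorm P v) ^ 4 / (P * (P + 2))"
  using expectation_U[OF i, of "\<lambda>x. inprod P x v"] expectation_U[OF i, of "\<lambda>x. (inprod P x v)\<^sup>2"]
    expectation_U[OF i, of "\<lambda>x. (inprod P x v) ^ 3"] expectation_U[OF i, of "\<lambda>x. (inprod P x v) ^ 4"]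
    integral_sphere_unif_odd[OF P_pos, of "\<lambda>t. t" v] integral_sphere_unif_odd[OF P_pos, of "\<lambda>t. t ^ 3" v]
  by (simp_all add: integral_sphere_unif_inprod_power2[OF P_pos] integral_sphere_unif_inprod_power4[OF P_pos])

definition proj_sum :: "nat \<Rightarrow> (nat \<Rightarrow> real) \<Rightarrow> 'a \<Rightarrow> real" where
  "proj_sum m v \<omega> = (\<Sum>i\<in>{1..m}. inprod P (U i \<omega>) v)"

lemma borel_measurable_proj_sum [measurable]: "m \<le> n \<Longrightarrow> proj_sum m v \<in> borel_measurable M"
  unfolding proj_sum_def by measurable

lemma AE_abs_proj_sum_le:
  assumes "m \<le> n"
  shows "AE \<omega> in M. \<bar>proj_sum m v \<omega>\<bar> \<le> m * (\<Sum>k<P. \<bar>v k\<bar>)"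
proof -
  have "AE \<omega> in M. \<forall>i\<in>{1..m}. \<bar>inprod P (U i \<omega>) v\<bar> \<le> (\<Sum>k<P. \<bar>v k\<bar>)"
    using assms by (subst AE_finite_all) (auto intro!: AE_abs_inprod_U_le)
  then show ?thesis
  proof eventually_elim
    case (elim \<omega>)
    have "\<bar>proj_sum m v \<omega>\<bar> \<le> (\<Sum>i\<in>{1..m}. \<bar>inprod P (U i \<omega>) v\<bar>)"
      unfolding proj_sum_def by (rule sum_abs)
    also have "\<dots> \<le> m * (\<Sum>k<P. \<bar>v k\<bar>)"
      using sum_mono[of "{1..m}" "\<lambda>i. \<bar>inprod P (U i \<omega>) v\<bar>" "\<lambda>_. \<Sum>k<P. \<bar>v k\<bar>"] elim by simp
    finally show ?case .
  qed
qed

lemma indep_var_proj_sum: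
  assumes m: "Suc m \<in> {1..n}"
  shows "indep_var borel (proj_sum m v) borel (\<lambda>\<omega>. inprod P (U (Suc m) \<omega>) v)"
proof -
  have "indep_var (PiM {1..m} (\<lambda>_. euclR P)) (\<lambda>\<omega>. restrict (\<lambda>i. U i \<omega>) {1..m})
       (PiM {Suc m} (\<lambda>_. euclR P)) (\<lambda>\<omega>. restrict (\<lambda>i. U i \<omega>) {Suc m})"
    by (rule indep_var_restrict[OF indep]) (use m in auto)
  then have "indep_var borel ((\<lambda>y. \<Sum>i\<in>{1..m}. inprod P (y i) v) \<circ> (\<lambda>\<omega>. restrict (\<lambda>i. U i \<omega>) {1..m}))
      borel ((\<lambda>y. inprod P (y (Suc m)) v) \<circ> (\<lambda>\<omega>. restrict (\<lambda>i. U i \<omega>) {Suc m}))"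
    by (rule indep_var_compose) measurable
  moreover have "(\<lambda>y. \<Sum>i\<in>{1..m}. inprod P (y i) v) \<circ> (\<lambda>\<omega>. restrict (\<lambda>i. U i \<omega>) {1..m}) = proj_sum m v"
    by (rule ext) (simp add: proj_sum_def)
  ultimately show ?thesis by (simp add: comp_def)
qed

lemma expectation_proj_sum_powers:
  assumes "m \<le> n"
  shows "expectation (\<lambda>\<omega>. (proj_sum m v \<omega>)\<^sup>2) = m * (enorm P v)\<^sup>2 / P \<and>
         expectation (\<lambda>\<omega>. (proj_sum m v \<omega>) ^ 4) \<le> 3 * (real m)\<^sup>2 * (enorm P v) ^ 4 / (real P)\<^sup>2"
  using assms
proof (induction m)
  case 0
  then show ?case by (simp add: proj_sum_def)
next
  case (Suc m)
  have i: "Suc m \<in> {1..n}" using Suc.prems by simp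
  have IH: "expectation (\<lambda>\<omega>. (proj_sum m v \<omega>)\<^sup>2) = m * (enorm P v)\<^sup>2 / P"
    "expectation (\<lambda>\<omega>. (proj_sum m v \<omega>) ^ 4) \<le> 3 * (real m)\<^sup>2 * (enorm P v) ^ 4 / (real P)\<^sup>2"
    using Suc by auto
  have split: "proj_sum (Suc m) v \<omega> = proj_sum m v \<omega> + inprod P (U (Suc m) \<omega>) v" for \<omega>
    unfolding proj_sum_def by simp
  note sum_moments = expectation_indep_var_add_powers[OF indep_var_proj_sum[OF i]
      AE_abs_proj_sum_le AE_abs_inprod_U_le[OF i] expectation_inprod_U(1,3)[OF i]]
  define e where "e = enorm P v"
  have P: "(0::real) < P" using P_pos by simp
  have "3 * e ^ 4 / (real P * (real P + 2)) \<le> 3 * e ^ 4 / (real P)\<^sup>2"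
    using P by (intro divide_left_mono) (auto simp: power2_eq_square e_def enorm_nonneg)
  moreover have "expectation (\<lambda>\<omega>. (proj_sum (Suc m) v \<omega>) ^ 4)
      = expectation (\<lambda>\<omega>. (proj_sum m v \<omega>) ^ 4) + 6 * (m * e\<^sup>2 / P) * (e\<^sup>2 / P)
        + 3 * e ^ 4 / (real P * (real P + 2))"
    unfolding split using Suc.prems sum_moments(2) IH(1) expectation_inprod_U(2,4)[OF i]
    by (simp add: e_def algebra_simps)
  ultimately have "expectation (\<lambda>\<omega>. (proj_sum (Suc m) v \<omega>) ^ 4)
      \<le> 3 * (real m)\<^sup>2 * e ^ 4 / (real P)\<^sup>2 + 6 * (m * e\<^sup>2 / P) * (e\<^sup>2 / P) + 3 * e ^ 4 / (real P)\<^sup>2"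
    using IH(2) unfolding e_def by linarith
  also have "\<dots> = 3 * (real (Suc m))\<^sup>2 * e ^ 4 / (real P)\<^sup>2"
    using P by (simp add: field_simps power2_eq_square power4_eq_xxxx)
  finally show ?case
    unfolding split using Suc.prems sum_moments(1) IH(1) expectation_inprod_U(2)[OF i]
    by (simp add: e_def add_divide_distrib algebra_simps)
qed

definition cross_sum :: "nat \<Rightarrow> 'a \<Rightarrow> real" where
  "cross_sum l \<omega> = (\<Sum>i=1..<l. inprod P (U i \<omega>) (U l \<omega>))"

lemma borel_measurable_cross_sum [measurable]: "l \<in> {1..n} \<Longrightarrow> cross_sum l \<in> borel_measurable M"
  unfolding cross_sum_def by (intro borel_measurable_sum borel_measurable_inprod measurable_U) auto

lemma AE_abs_cross_sum_le:
  assumes l: "l \<in> {1..n}"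
  shows "AE \<omega> in M. \<bar>cross_sum l \<omega>\<bar> \<le> real l * P"
proof -
  have "AE \<omega> in M. \<forall>i\<in>{1..n}. (\<forall>k<P. \<bar>U i \<omega> k\<bar> \<le> 1) \<and> enorm P (U i \<omega>) \<le> 1"
    by (subst AE_finite_all) (simp, blast intro: AE_U_bounded)
  then show ?thesis
  proof eventually_elim
    case (elim \<omega>)
    have "\<bar>cross_sum l \<omega>\<bar> \<le> (\<Sum>i=1..<l. \<bar>inprod P (U i \<omega>) (U l \<omega>)\<bar>)"
      unfolding cross_sum_def by (rule sum_abs)
    also have "\<dots> \<le> (\<Sum>i=1..<l. real P)"
    proof (rule sum_mono)
      fix i assume "i \<in> {1..<l}"
      have "\<bar>inprod P (U i \<omega>) (U l \<omega>)\<bar> \<le> (\<Sum>k<P. \<bar>U l \<omega> k\<bar>)"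
        using elim \<open>i \<in> {1..<l}\<close> l by (intro abs_inprod_le_sum_abs) auto
      also have "\<dots> \<le> (\<Sum>k<P. 1)"
        using elim l by (intro sum_mono) auto
      finally show "\<bar>inprod P (U i \<omega>) (U l \<omega>)\<bar> \<le> real P" by simp
    qed
    also have "\<dots> \<le> real l * P" by (simp add: mult_right_mono)
    finally show ?case .
  qed
qed

lemma integrable_cross_sum_power: "l \<in> {1..n} \<Longrightarrow> integrable M (\<lambda>\<omega>. (cross_sum l \<omega>) ^ k)"
  by (rule integrable_power_of_AE_bounded[OF borel_measurable_cross_sum AE_abs_cross_sum_le])

text \<open>Conditionally on \<open>U l\<close>, the cross sum is the projection sum along the fixed vector \<open>U l\<close>.\<close>

lemma nn_integral_cross_sum_power4:
  assumes l: "l \<in> {1..n}"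
  shows "(\<integral>\<^sup>+ \<omega>. ennreal ((cross_sum l \<omega>) ^ 4) \<partial>M)
    = (\<integral>\<^sup>+ \<omega>'. (\<integral>\<^sup>+ \<omega>. ennreal ((proj_sum (l - 1) (U l \<omega>') \<omega>) ^ 4) \<partial>M) \<partial>M)"
proof -
  define m where "m = l - 1"
  have m: "{1..<l} = {1..m}" using l by (auto simp: m_def)
  have indep_split: "indep_var (PiM {1..m} (\<lambda>_. euclR P)) (\<lambda>\<omega>. restrict (\<lambda>i. U i \<omega>) {1..m})
       (PiM {l} (\<lambda>_. euclR P)) (\<lambda>\<omega>. restrict (\<lambda>i. U i \<omega>) {l})"
    by (rule indep_var_restrict[OF indep]) (use l m in auto)
  define G where "G z = ennreal ((\<Sum>i\<in>{1..m}. inprod P (fst z i) (snd z l)) ^ 4)"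
    for z :: "(nat \<Rightarrow> nat \<Rightarrow> real) \<times> (nat \<Rightarrow> nat \<Rightarrow> real)"
  have G: "G \<in> borel_measurable (PiM {1..m} (\<lambda>_. euclR P) \<Otimes>\<^sub>M PiM {l} (\<lambda>_. euclR P))"
  proof -
    have "(\<lambda>z. fst z i) \<in> PiM {1..m} (\<lambda>_. euclR P) \<Otimes>\<^sub>M PiM {l} (\<lambda>_. euclR P) \<rightarrow>\<^sub>M euclR P"
      if "i \<in> {1..m}" for i
      using measurable_compose[OF measurable_fst measurable_component_singleton[OF that]] by (simp add: comp_def)
    moreover have "(\<lambda>z. snd z l) \<in> PiM {1..m} (\<lambda>_. euclR P) \<Otimes>\<^sub>M PiM {l} (\<lambda>_. euclR P) \<rightarrow>\<^sub>M euclR P"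
      using measurable_compose[OF measurable_snd measurable_component_singleton[of l "{l}"]] by (simp add: comp_def)
    ultimately show ?thesis
      unfolding G_def by measurable
  qed
  have "(\<integral>\<^sup>+ \<omega>. ennreal ((cross_sum l \<omega>) ^ 4) \<partial>M)
      = (\<integral>\<^sup>+ \<omega>. G (restrict (\<lambda>i. U i \<omega>) {1..m}, restrict (\<lambda>i. U i \<omega>) {l}) \<partial>M)"
    unfolding G_def cross_sum_def m by simp
  also have "\<dots> = (\<integral>\<^sup>+ \<omega>'. (\<integral>\<^sup>+ \<omega>. G (restrict (\<lambda>i. U i \<omega>) {1..m}, restrict (\<lambda>i. U i \<omega>') {l}) \<partial>M) \<partial>M)"
    by (rule nn_integral_indep_var_iterated[OF indep_split G])
  finally show ?thesis
    unfolding G_def proj_sum_def m_def by simp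
qed

lemma expectation_cross_sum_power4:
  assumes l: "l \<in> {1..n}"
  shows "expectation (\<lambda>\<omega>. (cross_sum l \<omega>) ^ 4) \<le> 3 * (real (l - 1))\<^sup>2 / (real P)\<^sup>2"
proof -
  define B where "B = 3 * (real (l - 1))\<^sup>2 / (real P)\<^sup>2"
  have inner: "(\<integral>\<^sup>+ \<omega>. ennreal ((proj_sum (l - 1) v \<omega>) ^ 4) \<partial>M) \<le> ennreal B"
    if v: "enorm P v \<le> 1" for v
  proof -
    have "l - 1 \<le> n" using l by auto
    then have "(\<integral>\<^sup>+ \<omega>. ennreal ((proj_sum (l - 1) v \<omega>) ^ 4) \<partial>M)
        = ennreal (expectation (\<lambda>\<omega>. (proj_sum (l - 1) v \<omega>) ^ 4))"
      by (intro nn_integral_eq_integral integrable_power_of_AE_bounded[OF borel_measurable_proj_sum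
          AE_abs_proj_sum_le]) simp_all
    also have "\<dots> \<le> ennreal B"
    proof (rule ennreal_leI)
      have "(enorm P v) ^ 4 \<le> 1" using v enorm_nonneg[of P v] by (simp add: power_le_one)
      then have "3 * (real (l - 1))\<^sup>2 * (enorm P v) ^ 4 / (real P)\<^sup>2 \<le> B"
        unfolding B_def by (intro divide_right_mono mult_left_le) simp_all
      then show "expectation (\<lambda>\<omega>. (proj_sum (l - 1) v \<omega>) ^ 4) \<le> B"
        using expectation_proj_sum_powers[OF \<open>l - 1 \<le> n\<close>, of v] by linarith
    qed
    finally show ?thesis .
  qed
  have "ennreal (expectation (\<lambda>\<omega>. (cross_sum l \<omega>) ^ 4)) = (\<integral>\<^sup>+ \<omega>. ennreal ((cross_sum l \<omega>) ^ 4) \<partial>M)"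
    by (rule nn_integral_eq_integral[symmetric]) (simp_all add: integrable_cross_sum_power[OF l])
  also have "\<dots> \<le> (\<integral>\<^sup>+ \<omega>'. ennreal B \<partial>M)"
    unfolding nn_integral_cross_sum_power4[OF l]
    by (rule nn_integral_mono_AE, rule eventually_mono[OF AE_U_bounded[OF l]]) (blast intro: inner)
  also have "\<dots> = ennreal B" by (simp add: emeasure_space_1)
  finally show ?thesis by (simp add: B_def ennreal_le_iff)
qed

lemma lindeberg_term_le:
  assumes l: "l \<in> {1..n}" and \<epsilon>: "0 < \<epsilon>"
  shows "expectation (\<lambda>\<omega>. let D = sqrt (2 * real P) / real n * cross_sum l \<omega> in D\<^sup>2 * indicator {x. \<bar>x\<bar> > \<epsilon>} D)
         \<le> 12 / ((real n)\<^sup>2 * \<epsilon>\<^sup>2)"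
proof -
  define c where "c = sqrt (2 * real P) / real n"
  have c4: "c ^ 4 = 4 * (real P)\<^sup>2 / (real n) ^ 4"
  proof -
    have "sqrt (2 * real P) ^ 4 = (2 * real P)\<^sup>2"
      using power_mult[of "sqrt (2 * real P)" 2 2] by simp
    then show ?thesis by (simp add: c_def power_divide power_mult_distrib)
  qed
  have "expectation (\<lambda>\<omega>. let D = c * cross_sum l \<omega> in D\<^sup>2 * indicator {x. \<bar>x\<bar> > \<epsilon>} D)
      \<le> expectation (\<lambda>\<omega>. c ^ 4 * (cross_sum l \<omega>) ^ 4 / \<epsilon>\<^sup>2)"
  proof (rule integral_mono_AE')
    show "integrable M (\<lambda>\<omega>. c ^ 4 * (cross_sum l \<omega>) ^ 4 / \<epsilon>\<^sup>2)"
      using integrable_cross_sum_power[OF l] by simp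
    show "AE \<omega> in M. (let D = c * cross_sum l \<omega> in D\<^sup>2 * indicator {x. \<bar>x\<bar> > \<epsilon>} D)
        \<le> c ^ 4 * (cross_sum l \<omega>) ^ 4 / \<epsilon>\<^sup>2"
    proof (rule AE_I2)
      fix \<omega>
      show "(let D = c * cross_sum l \<omega> in D\<^sup>2 * indicator {x. \<bar>x\<bar> > \<epsilon>} D)
          \<le> c ^ 4 * (cross_sum l \<omega>) ^ 4 / \<epsilon>\<^sup>2"
        using power2_mult_indicator_le_power4[OF \<epsilon>, of "c * cross_sum l \<omega>"]
        by (simp add: Let_def power_mult_distrib)
    qed
  qed (simp add: zero_le_even_power)
  also have "\<dots> = c ^ 4 * expectation (\<lambda>\<omega>. (cross_sum l \<omega>) ^ 4) / \<epsilon>\<^sup>2" by simp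
  also have "\<dots> \<le> c ^ 4 * (3 * (real (l - 1))\<^sup>2 / (real P)\<^sup>2) / \<epsilon>\<^sup>2"
    by (intro divide_right_mono mult_left_mono expectation_cross_sum_power4[OF l])
       (simp_all add: zero_le_even_power)
  also have "\<dots> = 12 * (real (l - 1))\<^sup>2 / ((real n) ^ 4 * \<epsilon>\<^sup>2)"
    unfolding c4 using P_pos by (simp add: field_simps)
  also have "\<dots> \<le> 12 * (real n)\<^sup>2 / ((real n) ^ 4 * \<epsilon>\<^sup>2)"
    using l by (intro divide_right_mono mult_left_mono power_mono) auto
  also have "\<dots> = 12 / ((real n)\<^sup>2 * \<epsilon>\<^sup>2)"
    using l by (simp add: field_simps power2_eq_square power4_eq_xxxx)
  finally show ?thesis unfolding c_def .
qed

lemma lindeberg_sum_le: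
  assumes "0 < \<epsilon>"
  shows "(\<Sum>l=1..n. expectation (\<lambda>\<omega>. let D = sqrt (2 * real P) / real n * cross_sum l \<omega>
           in D\<^sup>2 * indicator {x. \<bar>x\<bar> > \<epsilon>} D)) \<le> 12 / \<epsilon>\<^sup>2 / real n"
proof -
  have "(\<Sum>l=1..n. expectation (\<lambda>\<omega>. let D = sqrt (2 * real P) / real n * cross_sum l \<omega>
           in D\<^sup>2 * indicator {x. \<bar>x\<bar> > \<epsilon>} D)) \<le> (\<Sum>l=1..n. 12 / ((real n)\<^sup>2 * \<epsilon>\<^sup>2))"
    using assms by (intro sum_mono lindeberg_term_le)
  also have "\<dots> = 12 / \<epsilon>\<^sup>2 / real n"
    by (simp add: power2_eq_square field_simps)
  finally show ?thesis .
qed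

end

theorem lemma2:
  fixes p :: "nat \<Rightarrow> nat"
    and M :: "nat \<Rightarrow> 'a measure"
    and U :: "nat \<Rightarrow> nat \<Rightarrow> 'a \<Rightarrow> (nat \<Rightarrow> real)"
    and \<epsilon> :: real
  assumes p_pos: "\<And>n. p n > 0"
    and p_lim: "filterlim p at_top sequentially"
    and prob: "\<And>n. prob_space (M n)"
    and indep: "\<And>n. prob_space.indep_vars (M n) (\<lambda>_. euclR (p n)) (U n) {1..n}"
    and unif: "\<And>n i. i \<in> {1..n} \<Longrightarrow> distr (M n) (euclR (p n)) (U n i) = sphere_unif (p n)"
    and eps: "\<epsilon> > 0"
  shows "(\<lambda>n. \<Sum>l=1..n. LINT \<omega>|M n.
            (let D = sqrt (2 * real (p n)) / real n * (\<Sum>i=1..<l. inprod (p n) (U n i \<omega>) (U n l \<omega>))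
             in D\<^sup>2 * indicator {x. \<bar>x\<bar> > \<epsilon>} D))
         \<longlonglongrightarrow> 0" (is "?F \<longlonglongrightarrow> 0")
proof (rule tendsto_sandwich[OF _ _ tendsto_const lim_const_over_n])
  \<comment> \<open>The bound is uniform in the dimension.\<close>
  show "\<forall>\<^sub>F n in sequentially. ?F n \<le> 12 / \<epsilon>\<^sup>2 / real n"
  proof (rule always_eventually, rule allI)
    fix n
    interpret indep_sphere_vectors "M n" "p n" n "U n"
      using prob[of n] indep[of n] unif[of _ n] p_pos[of n]
      by (simp add: indep_sphere_vectors_def indep_sphere_vectors_axioms_def)
    show "?F n \<le> 12 / \<epsilon>\<^sup>2 / real n"
      using lindeberg_sum_le[OF eps] by (simp add: cross_sum_def)
  qed
qed (auto simp: Let_def indicator_def intro!: always_eventually sum_nonneg Bochner_Integration.integral_nonneg)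

end
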